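(* For every integer $v\ge1$, $$B^{(2v)}_{2v}(v)=(-1)^v\,4v\sum_{n=0}^{v-1}(2\pi)^{2n-2v}\,\Gamma(2v-2n)\,s(v,n)\,\zeta(2v-2n)=(-1)^v\,2^{1-2v}\,\Gamma(2v+1)\sum_{n=0}^{v-1}\pi^{2n-2v}\,c_{2v,n}\,\zeta(2v-2n).$$
   Context: The Nörlund polynomials $B^{(a)}_n(x)$ are defined by $\left(\frac{t}{e^t-1}\right)^a e^{xt}=\sum_{n\ge0}B^{(a)}_n(x)\frac{t^n}{n!}$. For integers $v\ge1$ and $0\le n\le v-1$, $s(v,n)$ denotes the $n$-th elementary symmetric polynomial evaluated at $1^2,2^2,\dots,(v-1)^2$, with $s(v,0)=1$. The generalized cosecant numbers $c_{\rho,k}$ are the coefficients in $\left(\frac{x}{\sin x}\right)^{\rho}=\sum_{k\ge0}c_{\rho,k}x^{2k}$. $\zeta$ is the Riemann zeta function. *)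

theory Defs
  imports "HOL-Analysis.Analysis" "HOL-Computational_Algebra.Formal_Power_Series"
begin

definition zeta :: "real \<Rightarrow> real" where
  "zeta s = (\<Sum>k. 1 / (real (Suc k)) powr s)"

text \<open>Generating function (t/(e^t-1))^a e^{xt}; (e^t-1)/t is the shift of e^t-1.\<close>
definition norlund_fps :: "nat \<Rightarrow> real \<Rightarrow> real fps" where
  "norlund_fps a x = (inverse (fps_shift 1 (fps_exp 1 - 1))) ^ a * fps_exp x"

definition norlund :: "nat \<Rightarrow> nat \<Rightarrow> real \<Rightarrow> real" where
  "norlund a n x = fact n * fps_nth (norlund_fps a x) n"

definition sq_esym :: "nat \<Rightarrow> nat \<Rightarrow> real" where
  "sq_esym v n = (\<Sum>S\<in>{S. S \<subseteq> {1..<v} \<and> card S = n}. \<Prod>k\<in>S. (real k)^2)"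

text \<open>Generalized cosecant numbers: (x/sin x)^rho = sum c_{rho,k} x^{2k}.\<close>
definition cosec_num :: "nat \<Rightarrow> nat \<Rightarrow> real" where
  "cosec_num rho k = fps_nth ((inverse (fps_shift 1 (fps_sin 1))) ^ rho) (2 * k)"

end

theory Submission
  imports Defs "HOL-Complex_Analysis.Complex_Analysis"
begin

text \<open>
  The generating function \<open>(t / (e\<^sup>t - 1))\<^sup>2\<^sup>v e\<^sup>v\<^sup>t\<close> equals \<open>(t / (2 sinh (t/2)))\<^sup>2\<^sup>v\<close>, which is
  \<open>(x / sin x)\<^sup>2\<^sup>v\<close> at \<open>x = i t / 2\<close>; hence \<open>B\<^sup>(\<^sup>2\<^sup>v\<^sup>)\<^sub>2\<^sub>v(v)\<close> is \<open>(2v)! (-1/4)\<^sup>v\<close> times the coefficient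
  of \<open>x\<^sup>2\<^sup>v\<close> in \<open>(x / sin x)\<^sup>2\<^sup>v\<close>. Since \<open>cos x / sin\<^sup>2\<^sup>v\<^sup>+\<^sup>1 x\<close> is a derivative, its residue vanishes,
  i.e. the coefficient of \<open>x\<^sup>2\<^sup>v\<close> in \<open>x cot x \<cdot> (x / sin x)\<^sup>2\<^sup>v\<close> is zero. Inserting
  \<open>x cot x = 1 - 2 \<Sum>\<^sub>k\<^sub>\<ge>\<^sub>1 \<zeta>(2k) x\<^sup>2\<^sup>k / \<pi>\<^sup>2\<^sup>k\<close>, obtained from the reflection formula of the digamma
  function, expresses the diagonal coefficient through the lower ones, which are the cosecant
  numbers \<open>c\<^sub>2\<^sub>v\<^sub>,\<^sub>n\<close>. Finally, the differential equation satisfied by the powers of \<open>x / sin x\<close>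
  gives \<open>(2v-1)! c\<^sub>2\<^sub>v\<^sub>,\<^sub>n = 4\<^sup>n s(v,n) (2v-1-2n)!\<close>, which turns one form of the sum into the other.
\<close>

unbundle no vec_syntax

section \<open>Even power series\<close>

definition even_fps :: "'a::zero fps \<Rightarrow> bool" where
  "even_fps F \<longleftrightarrow> (\<forall>n. odd n \<longrightarrow> F $ n = 0)"

lemma even_fps_iff_compose_uminus:
  fixes F :: "'a::field_char_0 fps"
  shows "even_fps F \<longleftrightarrow> F oo - fps_X = F"
proof -
  have "(-1) ^ n * F $ n = F $ n \<longleftrightarrow> (odd n \<longrightarrow> F $ n = 0)" for n
    by (cases "even n") (auto simp: neg_eq_iff_add_eq_0 mult_2[symmetric])
  then show ?thesis
    by (simp add: even_fps_def fps_compose_uminus' fps_eq_iff)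
qed

lemma even_fps_power:
  fixes F :: "'a::field_char_0 fps"
  shows "even_fps F \<Longrightarrow> even_fps (F ^ k)"
  by (simp add: even_fps_iff_compose_uminus fps_compose_power[symmetric])

lemma even_fps_inverse:
  fixes F :: "'a::field_char_0 fps"
  shows "even_fps F \<Longrightarrow> F $ 0 \<noteq> 0 \<Longrightarrow> even_fps (inverse F)"
  by (simp add: even_fps_iff_compose_uminus fps_inverse_compose)

text \<open>For even \<open>F\<close>, \<open>fps_even_scale c F\<close> is \<open>F(\<surd>c x)\<close>; \<open>c = -1/4\<close> gives the substitution \<open>x \<mapsto> i x / 2\<close>,
  which is not available over the reals.\<close>
definition fps_even_scale :: "'a::comm_ring_1 \<Rightarrow> 'a fps \<Rightarrow> 'a fps" where
  "fps_even_scale c F = Abs_fps (\<lambda>n. if even n then c ^ (n div 2) * F $ n else 0)"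

lemma fps_even_scale_nth [simp]:
  "fps_even_scale c F $ n = (if even n then c ^ (n div 2) * F $ n else 0)"
  by (simp add: fps_even_scale_def)

lemma fps_even_scale_one [simp]: "fps_even_scale c 1 = 1"
  by (rule fps_ext) simp

lemma fps_even_scale_mult:
  assumes F: "even_fps F" and G: "even_fps G"
  shows "fps_even_scale c (F * G) = fps_even_scale c F * fps_even_scale c G"
proof (rule fps_ext)
  fix n
  have "fps_even_scale c F $ i * fps_even_scale c G $ (n - i)
          = (if even n then c ^ (n div 2) * (F $ i * G $ (n - i)) else 0)" if "i \<le> n" for i
  proof (cases "even i \<and> even (n - i)")
    case True
    then have "even n" "i div 2 + (n - i) div 2 = n div 2"
      using that by (auto elim!: evenE simp: dvd_diff_nat)
    then show ?thesis
      using True by (simp add: power_add[symmetric] mult_ac)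
  next
    case False
    then consider "odd i" | "odd (n - i)"
      by blast
    then show ?thesis
      using F G by cases (auto simp: even_fps_def)
  qed
  then show "fps_even_scale c (F * G) $ n = (fps_even_scale c F * fps_even_scale c G) $ n"
    by (simp add: fps_mult_nth sum_distrib_left)
qed

lemma fps_even_scale_power:
  fixes F :: "'a::field_char_0 fps"
  shows "even_fps F \<Longrightarrow> fps_even_scale c (F ^ k) = fps_even_scale c F ^ k"
  by (induction k) (simp_all add: fps_even_scale_mult even_fps_power)

lemma fps_even_scale_inverse:
  fixes F :: "'a::field_char_0 fps"
  assumes "even_fps F" "F $ 0 \<noteq> 0"
  shows "fps_even_scale c (inverse F) = inverse (fps_even_scale c F)"
proof (rule fps_inverse_unique[symmetric])
  have "fps_even_scale c F * fps_even_scale c (inverse F) = fps_even_scale c (F * inverse F)"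
    using assms by (simp add: fps_even_scale_mult even_fps_inverse)
  then show "fps_even_scale c F * fps_even_scale c (inverse F) = 1"
    using assms(2) by (simp add: inverse_mult_eq_1')
qed

section \<open>The power series of x / sin x\<close>

definition sinc_fps :: "real fps" where
  "sinc_fps = fps_shift 1 (fps_sin 1)"

definition x_csc_fps :: "real fps" where
  "x_csc_fps = inverse sinc_fps"

lemma sinc_fps_nth: "sinc_fps $ n = (if even n then (-1) ^ (n div 2) / fact (Suc n) else 0)"
  by (auto simp: sinc_fps_def fps_sin_def algebra_simps elim!: evenE)

lemma sinc_fps_nth_0 [simp]: "sinc_fps $ 0 = 1"
  by (simp add: sinc_fps_nth)

lemma fps_sin_eq_X_mult_sinc: "fps_sin 1 = fps_X * sinc_fps"
  by (rule fps_ext) (simp add: sinc_fps_def)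

lemma sinc_mult_x_csc_fps [simp]: "sinc_fps * x_csc_fps = 1"
  by (simp add: x_csc_fps_def inverse_mult_eq_1')

lemma x_csc_fps_nth_0 [simp]: "x_csc_fps $ 0 = 1"
  by (simp add: x_csc_fps_def)

lemma x_csc_fps_power_nth_0 [simp]: "(x_csc_fps ^ m) $ 0 = 1"
  by (simp add: fps_power_zeroth)

lemma even_fps_sinc: "even_fps sinc_fps"
  by (simp add: even_fps_def sinc_fps_nth)

lemma even_fps_x_csc_power: "even_fps (x_csc_fps ^ m)"
  unfolding x_csc_fps_def by (intro even_fps_power even_fps_inverse even_fps_sinc) simp

lemma cosec_num_eq_x_csc_fps_power_nth: "cosec_num \<rho> k = (x_csc_fps ^ \<rho>) $ (2 * k)"
  by (simp add: cosec_num_def x_csc_fps_def sinc_fps_def)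

lemma fps_even_scale_sinc:
  "fps_even_scale (-1/4) sinc_fps = fps_shift 1 (fps_exp (1/2) - fps_exp (-1/2))"
proof (rule fps_ext)
  fix n
  show "fps_even_scale (-1/4) sinc_fps $ n = fps_shift 1 (fps_exp (1/2) - fps_exp (-1/2)) $ n"
  proof (cases "even n")
    case True
    then obtain j where j: "n = 2 * j"
      by (elim evenE)
    have "(-1/4::real) ^ j * (-1) ^ j = (1/2) ^ (2 * j + 1) * 2"
      by (simp add: power_mult_distrib[symmetric] power_mult power_add power2_eq_square)
    moreover have "(1/2::real) ^ (2 * j + 1) - (-1/2) ^ (2 * j + 1) = (1/2) ^ (2 * j + 1) * 2"
      by (simp add: power_add power_mult)
    ultimately show ?thesis
      using j by (simp add: sinc_fps_nth del: fact_Suc)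
  next
    case False
    then have "(-1/2::real) ^ (n + 1) = (1/2) ^ (n + 1)"
      by (simp add: power_divide)
    then show ?thesis
      using False by (simp add: sinc_fps_nth)
  qed
qed

lemma fps_shift_exp_sub_one_mult_exp:
  "fps_shift 1 (fps_exp 1 - 1) * fps_exp (-1/2) = fps_shift 1 (fps_exp (1/2) - fps_exp (-1/2 :: real))"
proof -
  let ?E = "fps_shift 1 (fps_exp 1 - 1 :: real fps)"
  have "?E * fps_X = fps_exp 1 - 1"
    by (rule fps_ext) simp
  then have "?E * fps_exp (-1/2) * fps_X = (fps_exp 1 - 1) * fps_exp (-1/2)"
    by (simp add: mult_ac)
  also have "\<dots> = fps_exp (1/2) - fps_exp (-1/2)"
    by (simp add: algebra_simps flip: fps_exp_add_mult)
  finally show ?thesis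
    by (metis fps_shift_times_fps_X')
qed

lemma norlund_fps_eq_even_scale_x_csc:
  "norlund_fps (2 * v) (real v) = fps_even_scale (-1/4) (x_csc_fps ^ (2 * v))"
proof -
  let ?E = "fps_shift 1 (fps_exp (1::real) - 1)"
  have "inverse (fps_exp (-1/2 :: real)) = fps_exp (1/2)"
    by (rule fps_inverse_unique) (simp add: fps_exp_add_mult[symmetric])
  moreover have "fps_even_scale (-1/4) x_csc_fps
      = inverse (fps_shift 1 (fps_exp (1/2) - fps_exp (-1/2)))"
    unfolding x_csc_fps_def fps_even_scale_sinc[symmetric]
    by (rule fps_even_scale_inverse[OF even_fps_sinc]) simp
  ultimately have "fps_even_scale (-1/4) x_csc_fps = inverse ?E * fps_exp (1/2)"
    by (simp only: fps_shift_exp_sub_one_mult_exp[symmetric] fps_inverse_mult)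
  then have "fps_even_scale (-1/4) x_csc_fps ^ (2 * v) = inverse ?E ^ (2 * v) * fps_exp (real v)"
    by (simp add: power_mult_distrib fps_exp_power_mult)
  then show ?thesis
    using fps_even_scale_power[OF even_fps_x_csc_power[of 1]] by (simp add: norlund_fps_def)
qed

lemma norlund_eq_x_csc_fps_power_nth:
  "norlund (2 * v) (2 * v) (real v) = fact (2 * v) * (-1/4) ^ v * (x_csc_fps ^ (2 * v)) $ (2 * v)"
  by (simp add: norlund_def norlund_fps_eq_even_scale_x_csc)

section \<open>The differential equation of the powers of x / sin x\<close>

lemma fps_XD_nth: "fps_XD F $ n = of_nat n * F $ n"
  by (simp add: fps_XD_def fps_mult_fps_X_deriv_shift)

lemma fps_XD_mult: "fps_XD (F * G) = fps_XD F * G + F * fps_XD (G :: 'a::comm_ring_1 fps)"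
  by (simp add: fps_XD_def algebra_simps)

lemma fps_XD_diff: "fps_XD (F - G) = fps_XD F - fps_XD (G :: 'a::comm_ring_1 fps)"
  by (simp add: fps_XD_def algebra_simps)

lemma fps_XD_of_nat_mult: "fps_XD (of_nat c * F) = of_nat c * fps_XD (F :: 'a::comm_ring_1 fps)"
  by (simp add: fps_XD_def mult.left_commute)

lemma fps_of_nat_mult_nth: "(of_nat c * F) $ n = of_nat c * (F :: 'a::comm_ring_1 fps) $ n"
  by (simp flip: fps_of_nat)

lemma fps_XD_sinc: "fps_XD sinc_fps = fps_cos 1 - sinc_fps"
proof -
  have "fps_deriv (fps_X * sinc_fps) = fps_cos 1"
    by (simp flip: fps_sin_eq_X_mult_sinc add: fps_sin_deriv)
  then show ?thesis
    by (simp add: fps_XD_def algebra_simps)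
qed

lemma fps_XD_cos: "fps_XD (fps_cos 1) = - (fps_X ^ 2 * sinc_fps)"
  by (simp add: fps_XD_def fps_cos_deriv fps_sin_eq_X_mult_sinc power2_eq_square
      fps_const_neg[symmetric])

lemma fps_cos_sq_add_X_sinc_sq: "fps_cos 1 ^ 2 + fps_X ^ 2 * sinc_fps ^ 2 = 1"
  using fps_sin_cos_sum_of_squares[of "1::real"]
  by (simp add: fps_sin_eq_X_mult_sinc power_mult_distrib)

lemma fps_XD_x_csc: "fps_XD x_csc_fps = x_csc_fps - fps_cos 1 * x_csc_fps ^ 2"
proof -
  have "fps_XD x_csc_fps = - fps_XD sinc_fps * x_csc_fps ^ 2"
    by (simp add: fps_XD_def x_csc_fps_def fps_inverse_deriv)
  also have "\<dots> = (sinc_fps * x_csc_fps) * x_csc_fps - fps_cos 1 * x_csc_fps ^ 2"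
    by (simp add: fps_XD_sinc power2_eq_square algebra_simps)
  finally show ?thesis
    by simp
qed

lemma fps_XD_x_csc_power:
  "fps_XD (x_csc_fps ^ m) = of_nat m * x_csc_fps ^ m - of_nat m * fps_cos 1 * x_csc_fps ^ (m + 1)"
proof (cases m)
  case (Suc k)
  have "fps_deriv (x_csc_fps ^ m) = of_nat m * fps_deriv x_csc_fps * x_csc_fps ^ k"
    by (simp only: Suc fps_deriv_power' diff_Suc_1)
  then have "fps_XD (x_csc_fps ^ m) = of_nat m * fps_XD x_csc_fps * x_csc_fps ^ k"
    by (simp add: fps_XD_def mult_ac)
  then show ?thesis
    by (simp add: Suc fps_XD_x_csc power2_eq_square algebra_simps)
qed (simp add: fps_XD_def)

lemma x_csc_power_ode:
  fixes m :: nat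
  defines "U \<equiv> x_csc_fps ^ m"
  shows "of_nat (m * (m + 1)) * x_csc_fps ^ (m + 2)
       = fps_XD (fps_XD U) - of_nat (2 * m + 1) * fps_XD U + of_nat (m * (m + 1)) * U
         + of_nat (m ^ 2) * (fps_X ^ 2 * U)"
proof -
  define V where "V = x_csc_fps ^ (m + 2)"
  have "sinc_fps ^ 2 * V = (sinc_fps * x_csc_fps) ^ 2 * U"
    by (simp only: U_def V_def power_mult_distrib power_add mult_ac)
  then have U: "U = sinc_fps ^ 2 * V"
    by simp
  have "sinc_fps * V = (sinc_fps * x_csc_fps) * x_csc_fps ^ (m + 1)"
    by (simp add: V_def mult_ac)
  then have U1: "x_csc_fps ^ (m + 1) = sinc_fps * V"
    by simp
  have XD_U: "fps_XD U = of_nat m * U - of_nat m * fps_cos 1 * (sinc_fps * V)"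
    unfolding U_def U1[symmetric] by (rule fps_XD_x_csc_power)
  have "fps_XD (x_csc_fps ^ (m + 1))
      = of_nat (m + 1) * (sinc_fps * V) - of_nat (m + 1) * fps_cos 1 * V"
    using fps_XD_x_csc_power[of "m + 1"] by (simp only: U1 V_def add.assoc one_add_one)
  then have "fps_XD (fps_cos 1 * x_csc_fps ^ (m + 1))
      = - (fps_X ^ 2 * sinc_fps) * (sinc_fps * V)
        + fps_cos 1 * (of_nat (m + 1) * (sinc_fps * V) - of_nat (m + 1) * fps_cos 1 * V)"
    by (simp only: fps_XD_mult fps_XD_cos U1)
  then have XD_XD_U: "fps_XD (fps_XD U)
      = of_nat m * fps_XD U - of_nat m * (- (fps_X ^ 2 * sinc_fps) * (sinc_fps * V)
        + fps_cos 1 * (of_nat (m + 1) * (sinc_fps * V) - of_nat (m + 1) * fps_cos 1 * V))"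
    by (simp only: U_def fps_XD_x_csc_power fps_XD_diff mult.assoc fps_XD_of_nat_mult)
  show ?thesis
    unfolding XD_XD_U unfolding XD_U unfolding U V_def[symmetric]
      of_nat_mult of_nat_add of_nat_power of_nat_1 of_nat_numeral
    using fps_cos_sq_add_X_sinc_sq by algebra
qed

lemma x_csc_power_nth_rec:
  "real (m * (m + 1)) * (x_csc_fps ^ (m + 2)) $ (j + 2)
     = (real m - real (j + 2)) * (real m + 1 - real (j + 2)) * (x_csc_fps ^ m) $ (j + 2)
       + real (m ^ 2) * (x_csc_fps ^ m) $ j"
proof -
  let ?U = "x_csc_fps ^ m"
  have "real (m * (m + 1)) * (x_csc_fps ^ (m + 2)) $ (j + 2)
      = real (j + 2) * (real (j + 2) * ?U $ (j + 2)) - real (2 * m + 1) * (real (j + 2) * ?U $ (j + 2))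
        + real (m * (m + 1)) * ?U $ (j + 2) + real (m ^ 2) * ?U $ (j + 2 - 2)"
    using arg_cong[OF x_csc_power_ode, of "\<lambda>F. F $ (j + 2)", of m]
    by (simp only: fps_of_nat_mult_nth fps_XD_nth fps_add_nth fps_sub_nth fps_X_power_mult_nth
        not_add_less2 if_False)
  then show ?thesis
    by (simp add: algebra_simps)
qed

section \<open>Coefficients of the powers of x / sin x\<close>

lemma sum_prod_card_subsets_insert:
  fixes f :: "'b \<Rightarrow> 'a::comm_semiring_1"
  assumes A: "finite A" and a: "a \<notin> A"
  shows "(\<Sum>S\<in>{S. S \<subseteq> insert a A \<and> card S = Suc n}. \<Prod>k\<in>S. f k)
       = (\<Sum>S\<in>{S. S \<subseteq> A \<and> card S = Suc n}. \<Prod>k\<in>S. f k)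
         + f a * (\<Sum>S\<in>{S. S \<subseteq> A \<and> card S = n}. \<Prod>k\<in>S. f k)"
proof -
  let ?L = "{S. S \<subseteq> A \<and> card S = Suc n}" and ?M = "{S. S \<subseteq> A \<and> card S = n}"
  have fin: "finite ?L" "finite ?M"
    using A by (auto intro: finite_subset[of _ "Pow A"])
  have fin_subset: "finite S" if "S \<subseteq> insert a A" for S
    using A that finite_subset by blast
  have split: "{S. S \<subseteq> insert a A \<and> card S = Suc n} = ?L \<union> insert a ` ?M"
  proof (intro equalityI subsetI)
    fix S
    assume S: "S \<in> {S. S \<subseteq> insert a A \<and> card S = Suc n}"
    show "S \<in> ?L \<union> insert a ` ?M"
    proof (cases "a \<in> S")
      case True
      then have "S = insert a (S - {a})" "S - {a} \<in> ?M"
        using S fin_subset by auto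
      then show ?thesis
        by blast
    qed (use S in auto)
  next
    fix S
    assume "S \<in> ?L \<union> insert a ` ?M"
    then show "S \<in> {S. S \<subseteq> insert a A \<and> card S = Suc n}"
      using a by (auto simp: card_insert_if finite_subset[OF _ A])
  qed
  have "inj_on (insert a) ?M"
    using a by (auto simp: inj_on_def)
  then have "(\<Sum>S\<in>insert a ` ?M. \<Prod>k\<in>S. f k) = (\<Sum>T\<in>?M. \<Prod>k\<in>insert a T. f k)"
    by (simp add: sum.reindex)
  also have "\<dots> = f a * (\<Sum>T\<in>?M. \<Prod>k\<in>T. f k)"
    unfolding sum_distrib_left
  proof (intro sum.cong refl)
    fix T
    assume "T \<in> ?M"
    then have "finite T" "a \<notin> T"
      using a A by (auto intro: finite_subset)
    then show "(\<Prod>k\<in>insert a T. f k) = f a * (\<Prod>k\<in>T. f k)"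
      by simp
  qed
  finally show ?thesis
    unfolding split using fin a by (subst sum.union_disjoint) auto
qed

lemma sq_esym_0 [simp]: "sq_esym v 0 = 1"
proof -
  have "{S. S \<subseteq> {1..<v} \<and> card S = 0} = {{}}"
    by (auto simp: finite_subset[OF _ finite_atLeastLessThan])
  then show ?thesis
    by (simp add: sq_esym_def)
qed

lemma sq_esym_Suc:
  assumes "v \<ge> 1"
  shows "sq_esym (Suc v) (Suc n) = sq_esym v (Suc n) + (real v) ^ 2 * sq_esym v n"
proof -
  have "{1..<Suc v} = insert v {1..<v}"
    using assms by auto
  then show ?thesis
    unfolding sq_esym_def by (simp add: sum_prod_card_subsets_insert)
qed

lemma sq_esym_eq_0:
  assumes "v \<le> n" "v \<ge> 1"
  shows "sq_esym v n = 0"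
proof -
  have "card S < n" if "S \<subseteq> {1..<v}" for S
    using card_mono[OF _ that] assms by (simp add: less_le_trans)
  then have "{S. S \<subseteq> {1..<v} \<and> card S = n} = {}"
    by blast
  then show ?thesis
    unfolding sq_esym_def by (simp only: sum.empty)
qed

lemma fact_mult_x_csc_power_nth_rec:
  assumes "p \<le> k"
  shows "fact (2 * Suc k + 1) * (x_csc_fps ^ (2 * Suc k + 2)) $ (2 * Suc p)
       = real (2 * (k - p)) * (real (2 * (k - p)) + 1)
           * (fact (2 * k + 1) * (x_csc_fps ^ (2 * k + 2)) $ (2 * Suc p))
         + 4 * real (Suc k) ^ 2 * (fact (2 * k + 1) * (x_csc_fps ^ (2 * k + 2)) $ (2 * p))"
proof -
  let ?U = "x_csc_fps ^ (2 * k + 2)" and ?V = "x_csc_fps ^ (2 * Suc k + 2)"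
  have rec: "real ((2 * k + 2) * (2 * k + 3)) * ?V $ (2 * Suc p)
      = real (2 * (k - p)) * (real (2 * (k - p)) + 1) * ?U $ (2 * Suc p) + 4 * real (Suc k) ^ 2 * ?U $ (2 * p)"
    using x_csc_power_nth_rec[of "2 * k + 2" "2 * p"] assms
    by (simp add: of_nat_diff algebra_simps power2_eq_square)
  have "2 * Suc k + 1 = (2 * k + 1) + 2"
    by simp
  then have "fact (2 * Suc k + 1) = real ((2 * k + 2) * (2 * k + 3)) * (fact (2 * k + 1) :: real)"
    by (simp add: algebra_simps)
  then have "fact (2 * Suc k + 1) * ?V $ (2 * Suc p)
      = fact (2 * k + 1) * (real ((2 * k + 2) * (2 * k + 3)) * ?V $ (2 * Suc p))"
    by (simp only: mult_ac)
  also have "\<dots> = fact (2 * k + 1) * (real (2 * (k - p)) * (real (2 * (k - p)) + 1) * ?U $ (2 * Suc p)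
      + 4 * real (Suc k) ^ 2 * ?U $ (2 * p))"
    by (simp only: rec)
  finally show ?thesis
    by (simp only: distrib_left mult_ac)
qed

lemma fact_mult_x_csc_power_nth:
  "n \<le> k \<Longrightarrow>
    fact (2 * k + 1) * (x_csc_fps ^ (2 * k + 2)) $ (2 * n) = 4 ^ n * sq_esym (Suc k) n * fact (2 * k + 1 - 2 * n)"
proof (induction k arbitrary: n)
  case 0
  then show ?case
    by simp
next
  case (Suc k n)
  show ?case
  proof (cases n)
    case 0
    then show ?thesis
      by simp
  next
    case (Suc p)
    with Suc.prems have "p \<le> k"
      by simp
    have IH_Suc_p: "real (2 * (k - p)) * (real (2 * (k - p)) + 1)
          * (fact (2 * k + 1) * (x_csc_fps ^ (2 * k + 2)) $ (2 * Suc p))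
        = 4 ^ Suc p * sq_esym (Suc k) (Suc p) * fact (2 * k + 1 - 2 * p)"
    proof (cases "p = k")
      case True
      then have "sq_esym (Suc k) (Suc p) = 0"
        by (intro sq_esym_eq_0) simp_all
      with True show ?thesis
        by simp
    next
      case False
      then obtain d where d: "k = p + Suc d"
        using \<open>p \<le> k\<close> by (auto dest!: le_neq_implies_less less_imp_Suc_add)
      have "2 * k + 1 - 2 * p = (2 * d + 1) + 2" "2 * (k - p) = 2 * d + 2"
        using d by simp_all
      then have "fact (2 * k + 1 - 2 * p) = real (2 * (k - p)) * (real (2 * (k - p)) + 1) * (fact (2 * d + 1) :: real)"
        by (simp add: algebra_simps)
      moreover have "2 * k + 1 - 2 * Suc p = 2 * d + 1"
        using d by simp
      ultimately show ?thesis
        using Suc.IH[of "Suc p"] d by simp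
    qed
    show ?thesis
      unfolding Suc fact_mult_x_csc_power_nth_rec[OF \<open>p \<le> k\<close>] IH_Suc_p Suc.IH[OF \<open>p \<le> k\<close>]
      by (simp add: sq_esym_Suc algebra_simps)
  qed
qed

section \<open>The power series of x cot x\<close>

lemma norm_less_one_not_Ints:
  fixes z :: complex
  assumes "norm z < 1" "z \<noteq> 0"
  shows "z \<notin> \<int>"
proof
  assume "z \<in> \<int>"
  then obtain n where n: "z = of_int n"
    by (elim Ints_cases)
  with assms have "n = 0"
    by (simp add: norm_of_int)
  with n assms(2) show False
    by simp
qed

lemma sin_pi_times_neq_0:
  fixes z :: complex
  assumes "z \<notin> \<int>"
  shows "sin (of_real pi * z) \<noteq> 0"
proof
  assume "sin (of_real pi * z) = 0"
  then obtain n :: int where "of_real pi * z = of_real (n * pi)"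
    by (auto simp: sin_eq_0)
  then have "z = of_int n"
    by (simp add: field_simps)
  with assms show False
    by simp
qed

lemma Digamma_reflection_complex:
  fixes z :: complex
  assumes z: "z \<notin> \<int>"
  shows "Digamma (1 - z) - Digamma z = of_real pi * cos (of_real pi * z) / sin (of_real pi * z)"
proof -
  have "1 - z \<notin> \<int>"
    using z Ints_diff[OF Ints_1, of "1 - z"] by auto
  with z have nonpos: "z \<notin> \<int>\<^sub>\<le>\<^sub>0" "1 - z \<notin> \<int>\<^sub>\<le>\<^sub>0"
    using nonpos_Ints_subset_Ints by blast+
  have sin: "sin (of_real pi * z) \<noteq> 0"
    using z by (rule sin_pi_times_neq_0)
  define A where "A = of_real pi / sin (of_real pi * z)"
  define B where "B = of_real pi * cos (of_real pi * z) / sin (of_real pi * z)"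
  have "((\<lambda>w. Gamma w * Gamma (1 - w)) has_field_derivative
      Gamma z * Gamma (1 - z) * (Digamma z - Digamma (1 - z))) (at z)"
    using nonpos by (auto intro!: derivative_eq_intros simp: algebra_simps)
  moreover have "((\<lambda>w. of_real pi / sin (of_real pi * w)) has_field_derivative A * (- B)) (at z)"
    using sin by (auto intro!: derivative_eq_intros simp: A_def B_def power2_eq_square)
  ultimately have "A * (Digamma z - Digamma (1 - z)) = A * (- B)"
    by (simp only: Gamma_reflection_complex A_def DERIV_unique)
  moreover have "A \<noteq> 0"
    using sin by (simp add: A_def)
  ultimately have "Digamma z - Digamma (1 - z) = - B"
    by (metis mult_left_cancel)
  then show ?thesis
    by (simp add: B_def algebra_simps)
qed

lemma x_cot_pi_eq_Digamma:
  fixes z :: complex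
  assumes "norm z < 1"
  shows "(1 + z * (Digamma (1 - z) - Digamma (1 + z))) * sin (of_real pi * z)
         = of_real pi * z * cos (of_real pi * z)"
proof (cases "z = 0")
  case False
  then have z: "z \<notin> \<int>"
    using assms by (intro norm_less_one_not_Ints)
  have "Digamma (1 + z) = Digamma z + 1 / z"
    using Digamma_plus1[OF False] by (simp add: add.commute)
  then show ?thesis
    using Digamma_reflection_complex[OF z] sin_pi_times_neq_0[OF z] False
    by (simp add: field_simps)
qed simp

lemma higher_deriv_Digamma_affine:
  fixes u :: complex
  assumes "norm u = 1"
  shows "(deriv ^^ n) (\<lambda>w. Digamma (u * w + 1)) 0 = u ^ n * Polygamma n 1"
proof -
  have "1 \<le> dist 1 (of_int k :: complex)" if "k \<le> 0" for k
  proof -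
    have "dist 1 (of_int k :: complex) = norm (of_int (1 - k) :: complex)"
      by (simp add: dist_norm)
    then show ?thesis
      using that by (simp only: norm_of_int)
  qed
  then have "ball 1 1 \<inter> \<int>\<^sub>\<le>\<^sub>0 = ({} :: complex set)"
    by (force elim!: nonpos_Ints_cases)
  then have "(deriv ^^ n) (\<lambda>w. Digamma (u * w + 1)) 0 = u ^ n * (deriv ^^ n) Digamma (u * 0 + 1)"
    using assms
    by (intro higher_deriv_compose_linear'[where S = "ball 0 1" and T = "ball 1 1"]
        holomorphic_on_Polygamma) (auto simp: dist_norm norm_mult)
  also have "(deriv ^^ n) Digamma (u * 0 + 1) = Polygamma n (1::complex)"
    using higher_deriv_Polygamma[of "1::complex" n 0] by simp
  finally show ?thesis .
qed

definition digamma_diff_fps :: "complex fps" where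
  "digamma_diff_fps = fps_expansion (\<lambda>z. Digamma (1 - z) - Digamma (1 + z)) 0"

lemma digamma_diff_fps_nth:
  "digamma_diff_fps $ n = ((-1) ^ n - 1) * Polygamma n 1 / fact n"
proof -
  have minus: "(deriv ^^ n) (\<lambda>w. Digamma (1 - w)) 0 = (-1) ^ n * Polygamma n (1::complex)"
    using higher_deriv_Digamma_affine[of "-1" n] by simp
  have plus: "(deriv ^^ n) (\<lambda>w. Digamma (1 + w)) 0 = Polygamma n (1::complex)"
    using higher_deriv_Digamma_affine[of 1 n] by (simp add: add.commute)
  have "(deriv ^^ n) (\<lambda>z. Digamma (1 - z) - Digamma (1 + z)) 0
      = (deriv ^^ n) (\<lambda>w. Digamma (1 - w)) 0 - (deriv ^^ n) (\<lambda>w. Digamma (1 + w)) (0::complex)"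
    by (intro higher_deriv_diff_at) (auto intro!: analytic_intros)
  also have "\<dots> = ((-1) ^ n - 1) * Polygamma n 1"
    by (simp only: minus plus left_diff_distrib mult_1)
  finally show ?thesis
    by (simp add: digamma_diff_fps_def fps_expansion_def)
qed

lemma digamma_diff_fps_mult_sin:
  "(1 + fps_X * digamma_diff_fps) * fps_sin (of_real pi)
     = fps_const (of_real pi) * fps_X * fps_cos (of_real pi)"
proof (rule fps_ext)
  fix n
  have "(\<lambda>z. Digamma (1 - z) - Digamma (1 + z)) has_fps_expansion digamma_diff_fps"
    unfolding digamma_diff_fps_def
    by (intro analytic_at_imp_has_fps_expansion_0) (auto intro!: analytic_intros)
  then have lhs: "(\<lambda>z. (1 + z * (Digamma (1 - z) - Digamma (1 + z))) * sin (of_real pi * z))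
      has_fps_expansion (1 + fps_X * digamma_diff_fps) * fps_sin (of_real pi)"
    by (intro fps_expansion_intros)
  have rhs: "(\<lambda>z::complex. of_real pi * z * cos (of_real pi * z))
      has_fps_expansion fps_const (of_real pi) * fps_X * fps_cos (of_real pi)"
    by (intro fps_expansion_intros)
  have "eventually (\<lambda>z. (1 + z * (Digamma (1 - z) - Digamma (1 + z))) * sin (of_real pi * z)
      = of_real pi * z * cos (of_real pi * z)) (nhds (0::complex))"
    using eventually_nhds_ball[OF zero_less_one, of "0::complex"]
    by eventually_elim (simp add: x_cot_pi_eq_Digamma)
  then show "((1 + fps_X * digamma_diff_fps) * fps_sin (of_real pi)) $ n
      = (fps_const (of_real pi) * fps_X * fps_cos (of_real pi)) $ n"
    unfolding fps_nth_fps_expansion[OF lhs] fps_nth_fps_expansion[OF rhs]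
    by (simp only: higher_deriv_cong_ev)
qed

text \<open>The Taylor coefficients of \<open>x cot x\<close>: \<open>x cot x = 1 - 2 \<Sum>\<^sub>k\<^sub>\<ge>\<^sub>1 \<zeta>(2k) x\<^sup>2\<^sup>k / \<pi>\<^sup>2\<^sup>k\<close>.\<close>
definition x_cot_coeff :: "nat \<Rightarrow> real" where
  "x_cot_coeff n = (if n = 0 then 1 else if even n then - 2 * zeta (real n) / pi ^ n else 0)"

lemma zeta_of_nat: "zeta (real (Suc m)) = (\<Sum>k. inverse ((1 + real k) ^ Suc m))"
proof -
  have "(\<lambda>k. 1 / real (Suc k) powr real (Suc m)) = (\<lambda>k. inverse ((1 + real k) ^ Suc m))"
  proof
    fix k
    have "real (Suc k) powr real (Suc m) = real (Suc k) ^ Suc m"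
      by (rule powr_realpow) simp
    then show "1 / real (Suc k) powr real (Suc m) = inverse ((1 + real k) ^ Suc m)"
      by (simp add: inverse_eq_divide)
  qed
  then show ?thesis
    unfolding zeta_def by simp
qed

lemma Polygamma_one_eq_zeta:
  assumes "m \<noteq> 0"
  shows "Polygamma m (1::real) = (-1) ^ Suc m * fact m * zeta (real (Suc m))"
  unfolding Polygamma_def if_not_P[OF assms] zeta_of_nat ..

lemma digamma_diff_fps_nth_eq_x_cot_coeff:
  "(1 + fps_X * digamma_diff_fps) $ n = of_real (x_cot_coeff n * pi ^ n)"
proof (cases n)
  case (Suc m)
  have "Polygamma m (1::complex) = of_real (Polygamma m 1)"
    using Polygamma_of_real[of 1 m] by simp
  moreover have "odd m \<Longrightarrow> m \<noteq> 0"
    by (simp add: odd_pos)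
  ultimately show ?thesis
    using Suc by (cases "even m") (simp_all add: digamma_diff_fps_nth x_cot_coeff_def Polygamma_one_eq_zeta)
qed (simp add: x_cot_coeff_def)

lemma fps_sin_of_real_nth: "fps_sin (complex_of_real c) $ k = of_real (c ^ k * fps_sin 1 $ k)"
  by (simp add: fps_sin_def)

lemma x_cot_coeff_mult_sin: "Abs_fps x_cot_coeff * fps_sin 1 = fps_X * fps_cos (1::real)"
proof (rule fps_ext)
  fix n
  have "of_real (pi ^ n * (Abs_fps x_cot_coeff * fps_sin 1) $ n)
      = (\<Sum>i=0..n. of_real (x_cot_coeff i * pi ^ i * (pi ^ (n - i) * fps_sin 1 $ (n - i))) :: complex)"
    unfolding fps_mult_nth sum_distrib_left of_real_sum
    by (intro sum.cong refl) (simp add: power_add[symmetric])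
  also have "\<dots> = ((1 + fps_X * digamma_diff_fps) * fps_sin (of_real pi)) $ n"
    by (simp only: fps_mult_nth digamma_diff_fps_nth_eq_x_cot_coeff fps_sin_of_real_nth of_real_mult)
  also have "\<dots> = (fps_const (of_real pi) * fps_X * fps_cos (of_real pi)) $ n"
    by (simp only: digamma_diff_fps_mult_sin)
  also have "\<dots> = of_real (pi ^ n * (fps_X * fps_cos 1) $ n)"
    by (cases n) (simp_all add: mult.assoc fps_cos_def)
  finally show "(Abs_fps x_cot_coeff * fps_sin 1) $ n = (fps_X * fps_cos 1) $ n"
    by simp
qed

lemma x_cot_coeff_eq: "Abs_fps x_cot_coeff = fps_cos 1 * x_csc_fps"
proof -
  have "fps_X * (Abs_fps x_cot_coeff * sinc_fps) = fps_X * fps_cos 1"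
    using x_cot_coeff_mult_sin by (simp add: fps_sin_eq_X_mult_sinc mult_ac)
  then have "Abs_fps x_cot_coeff * sinc_fps = fps_cos 1"
    by simp
  then have "Abs_fps x_cot_coeff * (sinc_fps * x_csc_fps) = fps_cos 1 * x_csc_fps"
    by (simp only: mult.assoc[symmetric])
  then show ?thesis
    by simp
qed

text \<open>The coefficient of \<open>x\<^sup>m\<close> in \<open>cos x (x / sin x)\<^sup>m\<^sup>+\<^sup>1\<close> is the residue of \<open>cos x / sin\<^sup>m\<^sup>+\<^sup>1 x\<close>,
  which vanishes because that function is a derivative.\<close>
lemma cos_mult_x_csc_power_nth_eq_0:
  assumes "m \<ge> 1"
  shows "(fps_cos 1 * x_csc_fps ^ (m + 1)) $ m = 0"
proof -
  have "real m * (x_csc_fps ^ m) $ m = real m * (x_csc_fps ^ m) $ m - real m * (fps_cos 1 * x_csc_fps ^ (m + 1)) $ m"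
    using arg_cong[OF fps_XD_x_csc_power[of m], of "\<lambda>F. F $ m"]
    by (simp only: fps_XD_nth fps_sub_nth mult.assoc fps_of_nat_mult_nth)
  then show ?thesis
    using assms by simp
qed

lemma x_csc_power_diag_eq_zeta_sum:
  assumes "v \<ge> 1"
  shows "(x_csc_fps ^ (2 * v)) $ (2 * v)
         = 2 * (\<Sum>n<v. (x_csc_fps ^ (2 * v)) $ (2 * n) * zeta (real (2 * v - 2 * n)) / pi ^ (2 * v - 2 * n))"
proof -
  define U where "U = x_csc_fps ^ (2 * v)"
  define g where "g i = U $ i * x_cot_coeff (2 * v - i)" for i
  have "even_fps U"
    unfolding U_def by (rule even_fps_x_csc_power)
  then have g_odd: "g (Suc (2 * n)) = 0" for n
    by (simp add: g_def even_fps_def)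
  have "0 = (fps_cos 1 * x_csc_fps ^ (2 * v + 1)) $ (2 * v)"
    using cos_mult_x_csc_power_nth_eq_0[of "2 * v"] assms by simp
  also have "fps_cos 1 * x_csc_fps ^ (2 * v + 1) = U * Abs_fps x_cot_coeff"
    by (simp add: U_def x_cot_coeff_eq mult_ac)
  also have "(U * Abs_fps x_cot_coeff) $ (2 * v) = (\<Sum>i<2 * v. g i) + U $ (2 * v)"
    by (simp add: fps_mult_nth g_def atLeast0AtMost lessThan_Suc_atMost[symmetric] x_cot_coeff_def)
  also have "(\<Sum>i<2 * v. g i) = (\<Sum>n<v. g (2 * n))"
    using sum_split_even_odd[where f = g and g = g and n = v] by (simp add: g_odd)
  also have "\<dots> = - 2 * (\<Sum>n<v. U $ (2 * n) * zeta (real (2 * v - 2 * n)) / pi ^ (2 * v - 2 * n))"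
    unfolding sum_distrib_left by (intro sum.cong refl) (auto simp: g_def x_cot_coeff_def)
  finally show ?thesis
    by (simp add: U_def)
qed

lemma powi_even_diff:
  fixes x :: real
  assumes "n \<le> v"
  shows "x powi (2 * int n - 2 * int v) = inverse (x ^ (2 * (v - n)))"
proof -
  have "2 * int n - 2 * int v = - int (2 * (v - n))"
    using assms by simp
  then show ?thesis
    by (simp only: power_int_minus power_int_of_nat)
qed

lemma two_powi_mult_Gamma:
  "2 powi (1 - 2 * int v) * Gamma (real (2 * v + 1)) = 2 * fact (2 * v) / 4 ^ v"
proof -
  have "(2::real) powi (1 - int (2 * v)) = 2 / 4 ^ v"
    using power_int_diff[of "2::real" 1 "int (2 * v)"]
    by (simp only: power_int_of_nat power_int_1_right power_mult) simp
  then have "(2::real) powi (1 - 2 * int v) = 2 / 4 ^ v"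
    by simp
  moreover have "Gamma (real (2 * v + 1)) = fact (2 * v)"
    using Gamma_fact[of "2 * v"] by (simp add: add.commute)
  ultimately show ?thesis
    by simp
qed

lemma norlund_eq_cosec_zeta_sum:
  assumes "v \<ge> 1"
  shows "norlund (2 * v) (2 * v) (real v)
         = (-1) ^ v * 2 powi (1 - 2 * int v) * Gamma (real (2 * v + 1))
           * (\<Sum>n<v. pi powi (2 * int n - 2 * int v) * cosec_num (2 * v) n * zeta (real (2 * v - 2 * n)))"
proof -
  let ?U = "x_csc_fps ^ (2 * v)"
  let ?S = "\<Sum>n<v. ?U $ (2 * n) * zeta (real (2 * v - 2 * n)) / pi ^ (2 * v - 2 * n)"
  have "norlund (2 * v) (2 * v) (real v) = fact (2 * v) * ((-1) ^ v / 4 ^ v) * (2 * ?S)"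
    unfolding norlund_eq_x_csc_fps_power_nth x_csc_power_diag_eq_zeta_sum[OF assms] power_divide ..
  also have "\<dots> = (-1) ^ v * (2 powi (1 - 2 * int v) * Gamma (real (2 * v + 1))) * ?S"
    unfolding two_powi_mult_Gamma by simp
  also have "?S = (\<Sum>n<v. pi powi (2 * int n - 2 * int v) * cosec_num (2 * v) n * zeta (real (2 * v - 2 * n)))"
    by (intro sum.cong refl)
      (simp add: powi_even_diff cosec_num_eq_x_csc_fps_power_nth right_diff_distrib' divide_inverse)
  finally show ?thesis
    by (simp only: mult.assoc)
qed

lemma zeta_term_eq_cosec_term:
  assumes "n < v"
  shows "4 * real v * ((2 * pi) powi (2 * int n - 2 * int v) * Gamma (real (2 * v - 2 * n)) * sq_esym v n * z)
       = 2 powi (1 - 2 * int v) * Gamma (real (2 * v + 1))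
         * (pi powi (2 * int n - 2 * int v) * cosec_num (2 * v) n * z)"
proof -
  obtain k where v: "v = Suc k"
    using assms by (cases v) auto
  define F where "F = (fact (2 * k + 1 - 2 * n) :: real)"
  define d where "d = v - n"
  have "fact (2 * k + 1) * cosec_num (2 * v) n = 4 ^ n * sq_esym v n * F"
    using fact_mult_x_csc_power_nth[of n k] assms by (simp add: v F_def cosec_num_eq_x_csc_fps_power_nth)
  then have cosec: "cosec_num (2 * v) n = 4 ^ n * sq_esym v n * F / fact (2 * k + 1)"
    by (simp add: eq_divide_eq mult.commute del: fact_Suc)
  have Gamma: "Gamma (real (2 * v - 2 * n)) = F"
    using Gamma_fact[of "2 * k + 1 - 2 * n"] assms by (simp add: v F_def add.commute Suc_diff_le)
  have fact: "fact (2 * v) = real (2 * v) * (fact (2 * k + 1) :: real)"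
    by (simp add: v)
  have four: "(4::real) ^ v = 4 ^ d * 4 ^ n"
    using assms by (simp add: d_def flip: power_add)
  have two_pi: "(2 * pi) ^ (2 * d) = 4 ^ d * pi ^ (2 * d)"
    by (simp add: power_mult_distrib power_mult)
  show ?thesis
    unfolding two_powi_mult_Gamma powi_even_diff[OF less_imp_le[OF assms]] d_def[symmetric]
      Gamma cosec fact four two_pi
    by (simp add: field_simps del: fact_Suc)
qed

theorem mainTheorem12:
  fixes v :: nat
  assumes "v \<ge> 1"
  shows "norlund (2 * v) (2 * v) (real v)
           = (-1)^v * 4 * real v * (\<Sum>n<v. (2 * pi) powi (2 * int n - 2 * int v)
                 * Gamma (real (2 * v - 2*n)) * sq_esym v n * zeta (real (2 * v - 2*n)))
       \<and> (-1)^v * 4 * real v * (\<Sum>n<v. (2 * pi) powi (2 * int n - 2 * int v)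
                 * Gamma (real (2 * v - 2*n)) * sq_esym v n * zeta (real (2 * v - 2*n)))
           = (-1)^v * 2 powi (1 - 2 * int v) * Gamma (real (2 * v + 1))
               * (\<Sum>n<v. pi powi (2 * int n - 2 * int v) * cosec_num (2 * v) n * zeta (real (2 * v - 2*n)))"
proof -
  have "4 * real v * (\<Sum>n<v. (2 * pi) powi (2 * int n - 2 * int v)
          * Gamma (real (2 * v - 2*n)) * sq_esym v n * zeta (real (2 * v - 2*n)))
      = 2 powi (1 - 2 * int v) * Gamma (real (2 * v + 1))
          * (\<Sum>n<v. pi powi (2 * int n - 2 * int v) * cosec_num (2 * v) n * zeta (real (2 * v - 2*n)))"
    unfolding sum_distrib_left by (intro sum.cong refl zeta_term_eq_cosec_term) simp
  then show ?thesis
    using norlund_eq_cosec_zeta_sum[OF assms] by (simp only: mult.assoc)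
qed

end
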